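(* For every $\alpha>0$ there exist $c<\infty$ and $u>0$ such that for all positive integers $i,j,k$, \[\sum_{\pi\in\mathrm{seq}_k(i,j,0)}\prod_{l=1}^k e^{-\alpha K_l}\le c\,e^{-uk^2}.\]
   Context: A legal sequence of length $k$ is a sequence of triples $\pi=[(i_0,j_0,0),(i_1,j_1,R_1),\dots,(i_k,j_k,R_k)]$ with $i_l,j_l\in\{1,2,3,\dots\}$, $R_l\in\{0,1\}$, such that for $0\le l\le k-1$: if $R_{l+1}=0$ then $i_{l+1}\ge i_l+1$ and $j_l\le j_{l+1}\le j_l+1$; if $R_{l+1}=1$ then $i_l\le i_{l+1}\le i_l+1$ and $j_{l+1}\ge j_l+1$. $\mathrm{seq}_k(i,j,0)$ is the set of legal sequences of length $k$ with $(i_k,j_k,R_k)=(i,j,0)$. For $1\le l\le k$, $K_l=i_{l-1}$ if $R_l=0$ and $K_l=j_{l-1}$ if $R_l=1$. *)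

theory Defs
  imports Complex_Main
begin

text \<open>A sequence is a list of triples (i_l, j_l, R_l), l = 0..k, with R_l in {0,1}.\<close>

definition seqI :: "(nat \<times> nat \<times> nat) list \<Rightarrow> nat \<Rightarrow> nat" where
  "seqI \<pi> l = fst (\<pi> ! l)"

definition seqJ :: "(nat \<times> nat \<times> nat) list \<Rightarrow> nat \<Rightarrow> nat" where
  "seqJ \<pi> l = fst (snd (\<pi> ! l))"

definition seqR :: "(nat \<times> nat \<times> nat) list \<Rightarrow> nat \<Rightarrow> nat" where
  "seqR \<pi> l = snd (snd (\<pi> ! l))"

definition legal_seq :: "nat \<Rightarrow> (nat \<times> nat \<times> nat) list \<Rightarrow> bool" where
  "legal_seq k \<pi> \<longleftrightarrow>
     length \<pi> = k + 1 \<and>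
     (\<forall>l\<le>k. 1 \<le> seqI \<pi> l \<and> 1 \<le> seqJ \<pi> l \<and> seqR \<pi> l \<in> {0, 1}) \<and>
     seqR \<pi> 0 = 0 \<and>
     (\<forall>l<k.
        (seqR \<pi> (l + 1) = 0 \<longrightarrow>
           seqI \<pi> (l + 1) \<ge> seqI \<pi> l + 1 \<and>
           seqJ \<pi> l \<le> seqJ \<pi> (l + 1) \<and> seqJ \<pi> (l + 1) \<le> seqJ \<pi> l + 1) \<and>
        (seqR \<pi> (l + 1) = 1 \<longrightarrow>
           seqI \<pi> l \<le> seqI \<pi> (l + 1) \<and> seqI \<pi> (l + 1) \<le> seqI \<pi> l + 1 \<and>
           seqJ \<pi> (l + 1) \<ge> seqJ \<pi> l + 1))"

definition seq0 :: "nat \<Rightarrow> nat \<Rightarrow> nat \<Rightarrow> (nat \<times> nat \<times> nat) list set" where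
  "seq0 k i j = {\<pi>. legal_seq k \<pi> \<and> \<pi> ! k = (i, j, 0)}"

definition seqK :: "(nat \<times> nat \<times> nat) list \<Rightarrow> nat \<Rightarrow> nat" where
  "seqK \<pi> l = (if seqR \<pi> l = 0 then seqI \<pi> (l - 1) else seqJ \<pi> (l - 1))"

end

theory Submission imports Defs begin

text \<open>
  Along a legal sequence the coordinate i_l strictly increases at every step with R = 0, and
  such a step contributes K = i_{l-1}; symmetrically for j and the steps with R = 1.  Hence if
  a and b steps of the two kinds occur, the exponents add up to at least a(a+1)/2 + b(b+1)/2,
  which is at least k^2/4.  So half of the weight exp(-alpha sum K) already gives the Gaussian
  factor exp(-alpha k^2/8).  The other half, exp(-alpha/2 sum K), summed over all legal
  sequences ending at a given point, is at most C^k: removing the last step, the predecessor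
  lies in a row or column of the target and the weights of the removed step form two
  geometric series.  Finally C^k exp(-alpha k^2/8) is at most a constant times
  exp(-alpha k^2/16).
\<close>

lemma legal_seq_step:
  assumes "legal_seq k \<pi>" "l < k"
  shows "(seqR \<pi> (Suc l) = 0 \<and> seqI \<pi> l < seqI \<pi> (Suc l) \<and>
           seqJ \<pi> l \<le> seqJ \<pi> (Suc l) \<and> seqJ \<pi> (Suc l) \<le> seqJ \<pi> l + 1)
       \<or> (seqR \<pi> (Suc l) = 1 \<and> seqI \<pi> l \<le> seqI \<pi> (Suc l) \<and>
           seqI \<pi> (Suc l) \<le> seqI \<pi> l + 1 \<and> seqJ \<pi> l < seqJ \<pi> (Suc l))"
proof -
  have "seqR \<pi> (Suc l) \<in> {0, 1}"
    using assms unfolding legal_seq_def by auto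
  with assms show ?thesis
    unfolding legal_seq_def Suc_eq_plus1 by fastforce
qed

lemma legal_seq_mono:
  assumes "legal_seq k \<pi>" "l \<le> m" "m \<le> k"
  shows "seqI \<pi> l \<le> seqI \<pi> m \<and> seqJ \<pi> l \<le> seqJ \<pi> m"
  using assms(2,3)
proof (induction m rule: dec_induct)
  case (step n)
  then show ?case
    using legal_seq_step[OF assms(1), of n] by auto
qed simp

lemma legal_seq_sum_K_lower:
  assumes "legal_seq k \<pi>" "l \<le> k"
  shows "\<exists>a b. a + b = l \<and> a < seqI \<pi> l \<and> b < seqJ \<pi> l \<and>
           a * (a + 1) + b * (b + 1) \<le> 2 * (\<Sum>m = 1..l. seqK \<pi> m)"
  using assms(2)
proof (induction l)
  case 0
  then show ?case
    using assms(1) unfolding legal_seq_def by auto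
next
  case (Suc n)
  then obtain a b where ab: "a + b = n" "a < seqI \<pi> n" "b < seqJ \<pi> n"
    "a * (a + 1) + b * (b + 1) \<le> 2 * (\<Sum>m = 1..n. seqK \<pi> m)"
    by auto
  have sum: "(\<Sum>m = 1..Suc n. seqK \<pi> m) = (\<Sum>m = 1..n. seqK \<pi> m) + seqK \<pi> (Suc n)"
    by simp
  from Suc.prems have "n < k"
    by simp
  from legal_seq_step[OF assms(1) this] show ?case
  proof (elim disjE)
    assume step: "seqR \<pi> (Suc n) = 0 \<and> seqI \<pi> n < seqI \<pi> (Suc n) \<and>
      seqJ \<pi> n \<le> seqJ \<pi> (Suc n) \<and> seqJ \<pi> (Suc n) \<le> seqJ \<pi> n + 1"
    then have "seqK \<pi> (Suc n) = seqI \<pi> n"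
      by (simp add: seqK_def)
    moreover have "(a + 1) * (a + 2) + b * (b + 1) = a * (a + 1) + b * (b + 1) + 2 * (a + 1)"
      by (simp add: algebra_simps)
    ultimately show ?thesis
      using ab sum step by (intro exI[of _ "a + 1"] exI[of _ b]) auto
  next
    assume step: "seqR \<pi> (Suc n) = 1 \<and> seqI \<pi> n \<le> seqI \<pi> (Suc n) \<and>
      seqI \<pi> (Suc n) \<le> seqI \<pi> n + 1 \<and> seqJ \<pi> n < seqJ \<pi> (Suc n)"
    then have "seqK \<pi> (Suc n) = seqJ \<pi> n"
      by (simp add: seqK_def)
    moreover have "a * (a + 1) + (b + 1) * (b + 2) = a * (a + 1) + b * (b + 1) + 2 * (b + 1)"
      by (simp add: algebra_simps)
    ultimately show ?thesis
      using ab sum step by (intro exI[of _ a] exI[of _ "b + 1"]) auto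
  qed
qed

lemma square_sum_le_pronic_sum: "(a + b :: nat) ^ 2 \<le> 2 * (a * (a + 1) + b * (b + 1))"
proof -
  have "0 \<le> (int a - int b) ^ 2"
    by simp
  then have "2 * int a * int b \<le> int a ^ 2 + int b ^ 2"
    by (simp add: power2_diff)
  then have "2 * a * b \<le> a ^ 2 + b ^ 2"
    by (metis of_nat_le_iff of_nat_add of_nat_mult of_nat_power of_nat_numeral)
  then show ?thesis
    by (simp add: power2_sum power2_eq_square algebra_simps)
qed

lemma legal_seq_sum_K_ge:
  assumes "legal_seq k \<pi>"
  shows "k ^ 2 \<le> 4 * (\<Sum>l = 1..k. seqK \<pi> l)"
proof -
  obtain a b where ab: "a + b = k" "a * (a + 1) + b * (b + 1) \<le> 2 * (\<Sum>l = 1..k. seqK \<pi> l)"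
    using legal_seq_sum_K_lower[OF assms order.refl] by blast
  have "k ^ 2 \<le> 2 * (a * (a + 1) + b * (b + 1))"
    using ab(1) square_sum_le_pronic_sum[of a b] by simp
  also have "\<dots> \<le> 2 * (2 * (\<Sum>l = 1..k. seqK \<pi> l))"
    using ab(2) by simp
  finally show ?thesis
    by simp
qed

text \<open>Legal sequences with a prescribed last position but arbitrary last R; dropping
  R_k = 0 makes the sets closed under removing the last step.\<close>

definition seqs_ending_at :: "nat \<Rightarrow> nat \<Rightarrow> nat \<Rightarrow> (nat \<times> nat \<times> nat) list set" where
  "seqs_ending_at k i j = {\<pi>. legal_seq k \<pi> \<and> seqI \<pi> k = i \<and> seqJ \<pi> k = j}"

definition seq_weight :: "real \<Rightarrow> nat \<Rightarrow> (nat \<times> nat \<times> nat) list \<Rightarrow> real" where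
  "seq_weight \<beta> k \<pi> = (\<Prod>l = 1..k. exp (- \<beta> * real (seqK \<pi> l)))"

text \<open>A triple (a, b, R) records the penultimate position (a, b) and the type R of the
  last step of a legal sequence ending at (i, j); that step has weight
  exp (- \<beta> * (if R = 0 then a else b)).\<close>

definition last_step_choices :: "nat \<Rightarrow> nat \<Rightarrow> (nat \<times> nat \<times> nat) set" where
  "last_step_choices i j = {1..i} \<times> {j - 1, j} \<times> {0} \<union> {i - 1, i} \<times> {1..j} \<times> {1}"

definition step_weight :: "real \<Rightarrow> nat \<times> nat \<times> nat \<Rightarrow> real" where
  "step_weight \<beta> = (\<lambda>(a, b, R). exp (- \<beta> * real (if R = 0 then a else b)))"

lemma seq_weight_nonneg: "0 \<le> seq_weight \<beta> k \<pi>"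
  unfolding seq_weight_def by (intro prod_nonneg) auto

lemma seq0_subset_seqs_ending_at: "seq0 k i j \<subseteq> seqs_ending_at k i j"
  unfolding seq0_def seqs_ending_at_def by (auto simp: seqI_def seqJ_def)

lemma finite_seqs_ending_at: "finite (seqs_ending_at k i j)"
proof (rule finite_subset)
  show "finite {xs. set xs \<subseteq> {..i} \<times> {..j} \<times> {..1::nat} \<and> length xs = Suc k}"
    by (intro finite_lists_length_eq) auto
  show "seqs_ending_at k i j \<subseteq> {xs. set xs \<subseteq> {..i} \<times> {..j} \<times> {..1} \<and> length xs = Suc k}"
  proof
    fix \<pi> assume "\<pi> \<in> seqs_ending_at k i j"
    then have legal: "legal_seq k \<pi>" "seqI \<pi> k = i" "seqJ \<pi> k = j"
      unfolding seqs_ending_at_def by auto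
    then have len: "length \<pi> = Suc k"
      unfolding legal_seq_def by simp
    have "x \<in> {..i} \<times> {..j} \<times> {..1}" if x: "x \<in> set \<pi>" for x
    proof -
      obtain l where "l < length \<pi>" "\<pi> ! l = x"
        using x by (auto simp: in_set_conv_nth)
      then have l: "l \<le> k" "x = (seqI \<pi> l, seqJ \<pi> l, seqR \<pi> l)"
        using len by (auto simp: seqI_def seqJ_def seqR_def)
      moreover have "seqR \<pi> l \<in> {0, 1}"
        using legal(1) l(1) unfolding legal_seq_def by auto
      ultimately show ?thesis
        using legal_seq_mono[OF legal(1) l(1) order.refl] legal by auto
    qed
    with len show "\<pi> \<in> {xs. set xs \<subseteq> {..i} \<times> {..j} \<times> {..1} \<and> length xs = Suc k}"
      by auto
  qed
qed

lemma legal_seq_butlast: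
  assumes "legal_seq (Suc k) \<pi>"
  shows "legal_seq k (butlast \<pi>)" "\<And>l. l \<le> k \<Longrightarrow> butlast \<pi> ! l = \<pi> ! l"
    "\<pi> = butlast \<pi> @ [\<pi> ! Suc k]"
proof -
  have len: "length \<pi> = Suc (Suc k)"
    using assms unfolding legal_seq_def by simp
  show nth: "\<And>l. l \<le> k \<Longrightarrow> butlast \<pi> ! l = \<pi> ! l"
    using len by (simp add: nth_butlast)
  then have "\<forall>l\<le>k. seqI (butlast \<pi>) l = seqI \<pi> l \<and> seqJ (butlast \<pi>) l = seqJ \<pi> l \<and>
      seqR (butlast \<pi>) l = seqR \<pi> l"
    by (simp add: seqI_def seqJ_def seqR_def)
  with assms len show "legal_seq k (butlast \<pi>)"
    unfolding legal_seq_def by auto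
  show "\<pi> = butlast \<pi> @ [\<pi> ! Suc k]"
    using len by (metis append_butlast_last_id last_conv_nth diff_Suc_1 list.size(3) nat.distinct(1))
qed

lemma seqs_ending_at_Suc_subset:
  "seqs_ending_at (Suc k) i j \<subseteq>
     (\<lambda>((a, b, R), q). q @ [(i, j, R)]) ` (SIGMA (a, b, R) : last_step_choices i j. seqs_ending_at k a b)"
proof
  fix \<pi> assume "\<pi> \<in> seqs_ending_at (Suc k) i j"
  then have legal: "legal_seq (Suc k) \<pi>" "seqI \<pi> (Suc k) = i" "seqJ \<pi> (Suc k) = j"
    unfolding seqs_ending_at_def by auto
  define a b R where "a = seqI \<pi> k" and "b = seqJ \<pi> k" and "R = seqR \<pi> (Suc k)"
  have "butlast \<pi> \<in> seqs_ending_at k a b"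
    using legal_seq_butlast[OF legal(1)] by (simp add: seqs_ending_at_def seqI_def seqJ_def a_def b_def)
  moreover have "\<pi> ! Suc k = (i, j, R)"
    using legal(2,3) by (simp add: R_def seqI_def seqJ_def seqR_def prod_eq_iff)
  then have "\<pi> = butlast \<pi> @ [(i, j, R)]"
    using legal_seq_butlast(3)[OF legal(1)] by simp
  moreover have "1 \<le> a" "1 \<le> b"
    using legal(1) unfolding legal_seq_def a_def b_def by auto
  then have "(a, b, R) \<in> last_step_choices i j"
    using legal_seq_step[OF legal(1) lessI] legal(2,3)
    unfolding last_step_choices_def a_def b_def R_def by auto
  ultimately show "\<pi> \<in> (\<lambda>((a, b, R), q). q @ [(i, j, R)]) `
      (SIGMA (a, b, R) : last_step_choices i j. seqs_ending_at k a b)"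
    by (intro rev_image_eqI[of "((a, b, R), butlast \<pi>)"]) auto
qed

lemma seq_weight_snoc:
  assumes "length q = Suc k"
  shows "seq_weight \<beta> (Suc k) (q @ [(i, j, R)]) = seq_weight \<beta> k q * step_weight \<beta> (seqI q k, seqJ q k, R)"
proof -
  have "seqK (q @ [(i, j, R)]) l = seqK q l" if "l \<in> {1..k}" for l
    using that assms by (auto simp: seqK_def seqI_def seqJ_def seqR_def nth_append)
  then have "(\<Prod>l = 1..k. exp (- \<beta> * real (seqK (q @ [(i, j, R)]) l))) = seq_weight \<beta> k q"
    unfolding seq_weight_def by (intro prod.cong) auto
  moreover have "seqK (q @ [(i, j, R)]) (Suc k) = (if R = 0 then seqI q k else seqJ q k)"
    using assms by (simp add: seqK_def seqI_def seqJ_def seqR_def nth_append)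
  ultimately show ?thesis
    by (simp add: seq_weight_def step_weight_def mult.commute)
qed

lemma sum_exp_neg_le:
  assumes "\<beta> > 0"
  shows "(\<Sum>a = 1..n. exp (- \<beta> * real a)) \<le> 1 / (1 - exp (- \<beta>))"
proof -
  define x where "x = exp (- \<beta>)"
  have x: "0 < x" "x < 1"
    using assms by (auto simp: x_def)
  have "(\<Sum>a = 1..n. exp (- \<beta> * real a)) \<le> (\<Sum>a<Suc n. exp (- \<beta> * real a))"
    by (intro sum_mono2) auto
  also have "\<dots> = (\<Sum>a<Suc n. x ^ a)"
    by (simp add: x_def mult.commute flip: exp_of_nat_mult)
  also have "\<dots> = (1 - x ^ Suc n) / (1 - x)"
    using x by (subst sum_gp_strict) simp
  also have "\<dots> \<le> 1 / (1 - x)"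
    using x by (intro divide_right_mono) auto
  finally show ?thesis
    by (simp add: x_def)
qed

lemma sum_step_weight_le:
  assumes "\<beta> > 0"
  shows "(\<Sum>p\<in>last_step_choices i j. step_weight \<beta> p) \<le> 4 / (1 - exp (- \<beta>))"
proof -
  define s where "s = 1 / (1 - exp (- \<beta>))"
  have two: "real (card {n - 1, n}) \<le> 2" for n :: nat
    by (simp add: card_insert_if)
  have "(\<Sum>p\<in>{1..i} \<times> {j - 1, j} \<times> {0}. step_weight \<beta> p)
      = (\<Sum>a = 1..i. real (card {j - 1, j}) * exp (- \<beta> * real a))"
    unfolding sum.cartesian_product' by (simp add: step_weight_def)
  also have "\<dots> \<le> (\<Sum>a = 1..i. 2 * exp (- \<beta> * real a))"
    by (intro sum_mono mult_right_mono two) auto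
  also have "\<dots> \<le> 2 * s"
    using sum_exp_neg_le[OF assms, of i] by (simp add: s_def flip: sum_distrib_left)
  finally have row: "(\<Sum>p\<in>{1..i} \<times> {j - 1, j} \<times> {0}. step_weight \<beta> p) \<le> 2 * s" .
  have "(\<Sum>p\<in>{i - 1, i} \<times> {1..j} \<times> {1}. step_weight \<beta> p)
      = real (card {i - 1, i}) * (\<Sum>b = 1..j. exp (- \<beta> * real b))"
    unfolding sum.cartesian_product' by (simp add: step_weight_def)
  also have "\<dots> \<le> 2 * s"
    using sum_exp_neg_le[OF assms, of j] two[of i] unfolding s_def
    by (intro mult_mono) (auto intro: sum_nonneg)
  finally have column: "(\<Sum>p\<in>{i - 1, i} \<times> {1..j} \<times> {1}. step_weight \<beta> p) \<le> 2 * s" .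
  have "(\<Sum>p\<in>last_step_choices i j. step_weight \<beta> p)
      = (\<Sum>p\<in>{1..i} \<times> {j - 1, j} \<times> {0}. step_weight \<beta> p)
        + (\<Sum>p\<in>{i - 1, i} \<times> {1..j} \<times> {1}. step_weight \<beta> p)"
    unfolding last_step_choices_def by (intro sum.union_disjoint) auto
  with row column show ?thesis
    by (simp add: s_def)
qed

lemma sum_seq_weight_Suc_le:
  "(\<Sum>\<pi>\<in>seqs_ending_at (Suc k) i j. seq_weight \<beta> (Suc k) \<pi>)
     \<le> (\<Sum>(a, b, R)\<in>last_step_choices i j.
           step_weight \<beta> (a, b, R) * (\<Sum>q\<in>seqs_ending_at k a b. seq_weight \<beta> k q))"
proof -
  define S where "S = (SIGMA (a, b, R) : last_step_choices i j. seqs_ending_at k a b)"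
  have finite_S: "finite S"
    unfolding S_def last_step_choices_def by (intro finite_SigmaI) (auto simp: finite_seqs_ending_at)
  have "(\<Sum>\<pi>\<in>seqs_ending_at (Suc k) i j. seq_weight \<beta> (Suc k) \<pi>)
      \<le> (\<Sum>\<pi>\<in>(\<lambda>((a, b, R), q). q @ [(i, j, R)]) ` S. seq_weight \<beta> (Suc k) \<pi>)"
    unfolding S_def
    by (intro sum_mono2 seqs_ending_at_Suc_subset finite_imageI finite_S[unfolded S_def])
      (simp add: seq_weight_nonneg)
  also have "\<dots> \<le> (\<Sum>((a, b, R), q)\<in>S. seq_weight \<beta> (Suc k) (q @ [(i, j, R)]))"
    by (rule order_trans[OF sum_image_le[OF finite_S]]) (auto simp: seq_weight_nonneg comp_def case_prod_beta)
  also have "\<dots> = (\<Sum>(a, b, R)\<in>last_step_choices i j.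
      \<Sum>q\<in>seqs_ending_at k a b. seq_weight \<beta> (Suc k) (q @ [(i, j, R)]))"
    using sum.Sigma[of "last_step_choices i j" "\<lambda>(a, b, R). seqs_ending_at k a b"
        "\<lambda>(a, b, R) q. seq_weight \<beta> (Suc k) (q @ [(i, j, R)])"]
    unfolding S_def by (simp add: finite_seqs_ending_at last_step_choices_def split_def)
  also have "\<dots> = (\<Sum>(a, b, R)\<in>last_step_choices i j.
      step_weight \<beta> (a, b, R) * (\<Sum>q\<in>seqs_ending_at k a b. seq_weight \<beta> k q))"
    by (intro sum.cong refl)
      (auto simp: sum_distrib_left seq_weight_snoc seqs_ending_at_def legal_seq_def mult.commute
        intro!: sum.cong)
  finally show ?thesis .
qed

lemma sum_seq_weight_le:
  assumes "\<beta> > 0"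
  shows "(\<Sum>\<pi>\<in>seqs_ending_at k i j. seq_weight \<beta> k \<pi>) \<le> (4 / (1 - exp (- \<beta>))) ^ k"
proof (induction k arbitrary: i j)
  case 0
  have "seqs_ending_at 0 i j \<subseteq> {[(i, j, 0)]}"
  proof
    fix \<pi> assume "\<pi> \<in> seqs_ending_at 0 i j"
    then have "length \<pi> = 1" "\<pi> ! 0 = (i, j, 0)"
      unfolding seqs_ending_at_def legal_seq_def seqI_def seqJ_def seqR_def by (auto simp: prod_eq_iff)
    then show "\<pi> \<in> {[(i, j, 0)]}"
      by (cases \<pi>) auto
  qed
  then have "(\<Sum>\<pi>\<in>seqs_ending_at 0 i j. seq_weight \<beta> 0 \<pi>) \<le> (\<Sum>\<pi>\<in>{[(i, j, 0)]}. seq_weight \<beta> 0 \<pi>)"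
    by (intro sum_mono2) (auto simp: seq_weight_def)
  then show ?case
    by (simp add: seq_weight_def)
next
  case (Suc k)
  define C where "C = 4 / (1 - exp (- \<beta>))"
  have "(\<Sum>\<pi>\<in>seqs_ending_at (Suc k) i j. seq_weight \<beta> (Suc k) \<pi>)
      \<le> (\<Sum>p\<in>last_step_choices i j. step_weight \<beta> p * C ^ k)"
    using sum_seq_weight_Suc_le[where \<beta> = \<beta> and k = k and i = i and j = j] Suc.IH unfolding C_def
    by (elim order_trans, intro sum_mono) (auto simp: step_weight_def intro: mult_left_mono)
  also have "\<dots> = (\<Sum>p\<in>last_step_choices i j. step_weight \<beta> p) * C ^ k"
    by (simp add: sum_distrib_right)
  also have "\<dots> \<le> C * C ^ k"
    using sum_step_weight_le[OF assms, of i j] assms unfolding C_def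
    by (intro mult_right_mono) auto
  finally show ?case
    by (simp add: C_def)
qed

lemma legal_seq_weight_le:
  assumes "legal_seq k \<pi>" "\<alpha> \<ge> 0"
  shows "seq_weight \<alpha> k \<pi> \<le> exp (- \<alpha> * real k ^ 2 / 8) * seq_weight (\<alpha> / 2) k \<pi>"
proof -
  define S where "S = (\<Sum>l = 1..k. real (seqK \<pi> l))"
  have "real (k ^ 2) \<le> real (4 * (\<Sum>l = 1..k. seqK \<pi> l))"
    using legal_seq_sum_K_ge[OF assms(1)] by linarith
  then have k_le_S: "real k ^ 2 \<le> 4 * S"
    by (simp add: S_def)
  have weight: "seq_weight \<beta> k \<pi> = exp (- \<beta> * S)" for \<beta>
    by (simp add: seq_weight_def S_def exp_sum sum_distrib_left)
  have "seq_weight \<alpha> k \<pi> = exp (- \<alpha> / 2 * S) * exp (- \<alpha> / 2 * S)"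
    by (simp add: weight flip: exp_add)
  also have "\<dots> \<le> exp (- \<alpha> * real k ^ 2 / 8) * exp (- \<alpha> / 2 * S)"
    using mult_left_mono[OF k_le_S assms(2)] by (intro mult_right_mono) auto
  finally show ?thesis
    by (simp add: weight)
qed

lemma linear_minus_quadratic_le:
  fixes a x L :: real
  assumes "a > 0"
  shows "x * L - a * x ^ 2 / 8 \<le> 4 * L ^ 2 / a - a / 16 * x ^ 2"
proof -
  have "0 \<le> a / 16 * (x - 8 * L / a) ^ 2"
    using assms by simp
  also have "\<dots> = a * x ^ 2 / 16 - x * L + 4 * L ^ 2 / a"
    using assms by (simp add: field_simps power2_eq_square)
  finally show ?thesis
    by simp
qed

theorem lemma4p17:
  fixes \<alpha> :: real
  assumes "\<alpha> > 0"
  shows "\<exists>c u :: real. u > 0 \<and>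
    (\<forall>i j k :: nat. 1 \<le> i \<longrightarrow> 1 \<le> j \<longrightarrow> 1 \<le> k \<longrightarrow>
      (\<Sum>\<pi>\<in>seq0 k i j. \<Prod>l = 1..k. exp (- \<alpha> * real (seqK \<pi> l)))
        \<le> c * exp (- u * real k ^ 2))"
proof -
  define C where "C = 4 / (1 - exp (- (\<alpha> / 2)))"
  have "C > 0"
    using assms by (simp add: C_def)
  define c where "c = exp (4 * ln C ^ 2 / \<alpha>)"
  have "(\<Sum>\<pi>\<in>seq0 k i j. seq_weight \<alpha> k \<pi>) \<le> c * exp (- (\<alpha> / 16) * real k ^ 2)" for i j k
  proof -
    have "(\<Sum>\<pi>\<in>seq0 k i j. seq_weight \<alpha> k \<pi>)
        \<le> (\<Sum>\<pi>\<in>seq0 k i j. exp (- \<alpha> * real k ^ 2 / 8) * seq_weight (\<alpha> / 2) k \<pi>)"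
      using assms by (intro sum_mono legal_seq_weight_le) (auto simp: seq0_def)
    also have "\<dots> \<le> (\<Sum>\<pi>\<in>seqs_ending_at k i j. exp (- \<alpha> * real k ^ 2 / 8) * seq_weight (\<alpha> / 2) k \<pi>)"
      by (intro sum_mono2 finite_seqs_ending_at seq0_subset_seqs_ending_at) (simp add: seq_weight_nonneg)
    also have "\<dots> \<le> exp (- \<alpha> * real k ^ 2 / 8) * C ^ k"
      using sum_seq_weight_le[of "\<alpha> / 2" k i j] assms
      by (simp add: C_def flip: sum_distrib_left)
    also have "C ^ k = exp (real k * ln C)"
      using \<open>C > 0\<close> by (simp add: exp_of_nat_mult)
    also have "exp (- \<alpha> * real k ^ 2 / 8) * \<dots> = exp (real k * ln C - \<alpha> * real k ^ 2 / 8)"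
      by (simp flip: exp_add)
    also have "\<dots> \<le> c * exp (- (\<alpha> / 16) * real k ^ 2)"
      using linear_minus_quadratic_le[OF assms, of "real k" "ln C"] by (simp add: c_def flip: exp_add)
    finally show ?thesis .
  qed
  then show ?thesis
    using assms unfolding seq_weight_def by (intro exI[of _ c] exI[of _ "\<alpha> / 16"]) auto
qed

end
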